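(* Let $\mathscr F$ be a class of functions $\Omega\to[0,1]$, $\varepsilon>0$ and $d\in\mathbb N$. The following are equivalent: (1) $\mathrm{fat}_\varepsilon(\mathscr F\,\mathrm{mod}\,\omega_1)\le d$; (2) for every countable subclass $\mathscr F'\subseteq\mathscr F$ there is a countable set $N\subseteq\Omega$ (depending on $\mathscr F'$) such that $\mathrm{fat}_\varepsilon(\mathscr F'\restriction(\Omega\setminus N))\le d$.
   Context: A finite $A\subseteq X$ is $\varepsilon$-fat shattered by $\mathscr F$ if there is $h:A\to[0,1]$ such that for every $B\subseteq A$ some $f_B\in\mathscr F$ has $f_B(a)>h(a)+\varepsilon$ for $a\in B$ and $f_B(a)<h(a)-\varepsilon$ for $a\in A\setminus B$; $\mathrm{fat}_\varepsilon(\mathscr F\restriction X)$ is the supremum of sizes of such $A\subseteq X$. $\mathrm{fat}_\varepsilon(\mathscr F\,\mathrm{mod}\,\omega_1)$ is the supremum of $n$ for which there exist uncountable $A_1,\dots,A_n\subseteq\Omega$ and $h:\{1,\dots,n\}\to[0,1]$ such that for every $J\subseteq\{1,\dots,n\}$ there is $f_J\in\mathscr F$ with $f_J(x)>h(i)+\varepsilon$ whenever $i\in J$, $x\in A_i$, and $f_J(x)<h(i)-\varepsilon$ whenever $i\notin J$, $x\in A_i$. *)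

theory Defs
  imports "HOL-Library.Extended_Nat" "HOL-Library.Countable_Set"
begin

definition fat_shattered :: "('a \<Rightarrow> real) set \<Rightarrow> real \<Rightarrow> 'a set \<Rightarrow> bool" where
  "fat_shattered F \<epsilon> A \<longleftrightarrow> finite A \<and>
     (\<exists>h::'a \<Rightarrow> real. (\<forall>a\<in>A. 0 \<le> h a \<and> h a \<le> 1) \<and>
        (\<forall>B\<subseteq>A. \<exists>f\<in>F. (\<forall>a\<in>B. f a > h a + \<epsilon>) \<and> (\<forall>a\<in>A - B. f a < h a - \<epsilon>)))"

definition fat_restr :: "('a \<Rightarrow> real) set \<Rightarrow> real \<Rightarrow> 'a set \<Rightarrow> enat" where
  "fat_restr F \<epsilon> X = Sup {enat (card A) | A. A \<subseteq> X \<and> fat_shattered F \<epsilon> A}"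

definition fat_shattered_mod_omega1 :: "('a \<Rightarrow> real) set \<Rightarrow> real \<Rightarrow> nat \<Rightarrow> bool" where
  "fat_shattered_mod_omega1 F \<epsilon> n \<longleftrightarrow>
     (\<exists>(A::nat \<Rightarrow> 'a set) (h::nat \<Rightarrow> real).
        (\<forall>i\<in>{1..n}. uncountable (A i)) \<and> (\<forall>i\<in>{1..n}. 0 \<le> h i \<and> h i \<le> 1) \<and>
        (\<forall>J\<subseteq>{1..n}. \<exists>f\<in>F.
            (\<forall>i\<in>J. \<forall>x\<in>A i. f x > h i + \<epsilon>) \<and>
            (\<forall>i\<in>{1..n} - J. \<forall>x\<in>A i. f x < h i - \<epsilon>)))"

definition fat_mod_omega1 :: "('a \<Rightarrow> real) set \<Rightarrow> real \<Rightarrow> enat" where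
  "fat_mod_omega1 F \<epsilon> = Sup {enat n | n. fat_shattered_mod_omega1 F \<epsilon> n}"

end

theory Submission
  imports Defs "HOL-Analysis.Finite_Cartesian_Product"
begin

(* (1) ==> (2).  Fix a countable F' <= F and put n = d + 1.  A "template" consists of
   rational levels q_1..q_n in [0,1] and a choice of g_J in F' for every J <= {1..n};
   there are only countably many templates.  Each template determines n "witness cells":
   cell i is the set of points x on which g_J(x) lies above q_i + eps for i in J and
   below q_i - eps for i not in J.  If all n cells of some template were uncountable,
   F would shatter them mod omega_1, contradicting (1); so every template has a
   countable cell, and we let N be the union of all these countable cells.  Any n-point
   set outside N that is fat shattered by F' can be given rational levels, and then its
   points lie in the cells of one template -- one of which lies inside N, absurd.

   (2) ==> (1).  Given uncountable A_1..A_n shattered mod omega_1 by witnesses g_J,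
   apply (2) to the finite class {g_J}; choosing a_i in A_i outside the countable N
   gives n distinct points (the A_i are disjoint since eps > 0) fat shattered by {g_J}
   outside N, so n <= d. *)

lemma fat_shattered_subset:
  assumes "fat_shattered F \<epsilon> A" "A' \<subseteq> A"
  shows "fat_shattered F \<epsilon> A'"
proof -
  from assms(1) obtain h where fin: "finite A" and h01: "\<forall>a\<in>A. 0 \<le> h a \<and> h a \<le> 1"
    and sh: "\<forall>B\<subseteq>A. \<exists>f\<in>F. (\<forall>a\<in>B. f a > h a + \<epsilon>) \<and> (\<forall>a\<in>A - B. f a < h a - \<epsilon>)"
    unfolding fat_shattered_def by blast
  have "\<exists>f\<in>F. (\<forall>a\<in>B. f a > h a + \<epsilon>) \<and> (\<forall>a\<in>A' - B. f a < h a - \<epsilon>)" if "B \<subseteq> A'" for B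
  proof -
    from sh that assms(2) obtain f where "f \<in> F" "\<forall>a\<in>B. f a > h a + \<epsilon>" "\<forall>a\<in>A - B. f a < h a - \<epsilon>"
      by (meson order_trans)
    then show ?thesis using assms(2) by blast
  qed
  then show ?thesis
    unfolding fat_shattered_def using fin h01 assms(2) finite_subset by blast
qed

lemma fat_restr_le_if_no_shattered_card:
  assumes "\<And>A. A \<subseteq> X \<Longrightarrow> fat_shattered F \<epsilon> A \<Longrightarrow> card A = Suc d \<Longrightarrow> False"
  shows "fat_restr F \<epsilon> X \<le> enat d"
  unfolding fat_restr_def
proof (rule Sup_least, clarify)
  fix A assume A: "A \<subseteq> X" "fat_shattered F \<epsilon> A"
  show "enat (card A) \<le> enat d"
  proof (rule ccontr)
    assume "\<not> enat (card A) \<le> enat d"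
    then obtain A' where "A' \<subseteq> A" "card A' = Suc d"
      using obtain_subset_with_card_n[of "Suc d" A] by auto
    then show False using assms[of A'] A fat_shattered_subset by blast
  qed
qed

lemma fat_mod_omega1_le_iff:
  "fat_mod_omega1 F \<epsilon> \<le> enat d \<longleftrightarrow> (\<forall>n. fat_shattered_mod_omega1 F \<epsilon> n \<longrightarrow> n \<le> d)"
  unfolding fat_mod_omega1_def by (auto simp: Sup_le_iff)

section \<open>Rational levels\<close>

lemma rational_unit_point_in_open:
  fixes U :: "real set"
  assumes "open U" "x \<in> U" "0 \<le> x" "x \<le> 1"
  shows "\<exists>q\<in>\<rat> \<inter> {0..1}. q \<in> U"
proof -
  obtain e where e: "e > 0" "\<And>y. dist y x < e \<Longrightarrow> y \<in> U"
    using assms(1,2) open_dist by metis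
  obtain lo hi where "lo < hi" "{lo<..<hi} \<subseteq> {0..1} \<inter> {x - e<..<x + e}"
  proof (cases "x < 1")
    case True
    show ?thesis by (rule that[of x "min (x + e) 1"]) (use True e assms in auto)
  next
    case False
    show ?thesis by (rule that[of "max (x - e) 0" x]) (use False e assms in auto)
  qed
  moreover obtain q where "q \<in> \<rat>" "q \<in> {lo<..<hi}"
    using Rats_dense_in_real[OF \<open>lo < hi\<close>] by auto
  ultimately have "q \<in> \<rat> \<inter> {0..1}" "q \<in> {x - e<..<x + e}"
    by blast+
  then have "q \<in> \<rat> \<inter> {0..1}" "dist q x < e"
    by (auto simp: dist_real_def)
  then show ?thesis using e(2) by blast
qed

text \<open>The levels witnessing a fat shattering of a finite set can be chosen rational: for each
  point the admissible levels form an open set (a finite intersection of open half-lines).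
  This makes the witnesses range over a countable set.\<close>
lemma fat_shattered_rational_levels:
  assumes "fat_shattered F \<epsilon> A"
  shows "\<exists>h. (\<forall>a\<in>A. h a \<in> \<rat> \<inter> {0..1}) \<and>
     (\<forall>B\<subseteq>A. \<exists>f\<in>F. (\<forall>a\<in>B. f a > h a + \<epsilon>) \<and> (\<forall>a\<in>A - B. f a < h a - \<epsilon>))"
proof -
  from assms obtain h where fin: "finite A" and h01: "\<forall>a\<in>A. 0 \<le> h a \<and> h a \<le> 1"
    and sh: "\<forall>B\<subseteq>A. \<exists>f\<in>F. (\<forall>a\<in>B. f a > h a + \<epsilon>) \<and> (\<forall>a\<in>A - B. f a < h a - \<epsilon>)"
    unfolding fat_shattered_def by blast
  obtain fB where fB: "\<And>B. B \<subseteq> A \<Longrightarrow>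
      fB B \<in> F \<and> (\<forall>a\<in>B. fB B a > h a + \<epsilon>) \<and> (\<forall>a\<in>A - B. fB B a < h a - \<epsilon>)"
    using sh by metis
  define admissible where "admissible = (\<lambda>a B. if a \<in> B then {..<fB B a - \<epsilon>} else {fB B a + \<epsilon><..})"
  define U where "U = (\<lambda>a. \<Inter>B\<in>Pow A. admissible a B)"
  have "\<exists>q. q \<in> \<rat> \<inter> {0..1} \<and> q \<in> U a" if a: "a \<in> A" for a
  proof -
    have "open (U a)" unfolding U_def admissible_def using fin by (intro open_INT) auto
    moreover have "h a \<in> admissible a B" if "B \<subseteq> A" for B
      using fB[OF that] a by (cases "a \<in> B") (auto simp: admissible_def dest!: bspec[where x = a])
    then have "h a \<in> U a" unfolding U_def by blast
    ultimately show ?thesis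
      using rational_unit_point_in_open[of "U a" "h a"] h01 a by blast
  qed
  then obtain h' where h': "\<forall>a\<in>A. h' a \<in> \<rat> \<inter> {0..1} \<and> h' a \<in> U a" by metis
  have "\<exists>f\<in>F. (\<forall>a\<in>B. f a > h' a + \<epsilon>) \<and> (\<forall>a\<in>A - B. f a < h' a - \<epsilon>)" if B: "B \<subseteq> A" for B
  proof -
    have adm: "h' a \<in> admissible a B" if "a \<in> A" for a using h' B that unfolding U_def by blast
    have "\<forall>a\<in>B. fB B a > h' a + \<epsilon>"
      using adm B unfolding admissible_def by fastforce
    moreover have "\<forall>a\<in>A - B. fB B a < h' a - \<epsilon>"
      using adm unfolding admissible_def by fastforce
    ultimately show ?thesis using fB[OF B] by blast
  qed
  then show ?thesis using h' by blast
qed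

section \<open>Witness cells of a template\<close>

definition witness_cell :: "real \<Rightarrow> nat \<Rightarrow> (nat \<Rightarrow> real) \<Rightarrow> (nat set \<Rightarrow> 'a \<Rightarrow> real) \<Rightarrow> nat \<Rightarrow> 'a set"
  where "witness_cell \<epsilon> n q g i =
    {x. \<forall>J\<subseteq>{1..n}. (i \<in> J \<longrightarrow> g J x > q i + \<epsilon>) \<and> (i \<notin> J \<longrightarrow> g J x < q i - \<epsilon>)}"

lemma uncountable_cells_imp_mod_shattered:
  assumes "\<forall>J\<subseteq>{1..n}. g J \<in> F" "\<forall>i\<in>{1..n}. 0 \<le> q i \<and> q i \<le> 1"
    and "\<forall>i\<in>{1..n}. uncountable (witness_cell \<epsilon> n q g i)"
  shows "fat_shattered_mod_omega1 F \<epsilon> n"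
  unfolding fat_shattered_mod_omega1_def
proof (intro exI[of _ "witness_cell \<epsilon> n q g"] exI[of _ q] conjI allI impI)
  fix J assume J: "J \<subseteq> {1..n}"
  show "\<exists>f\<in>F. (\<forall>i\<in>J. \<forall>x\<in>witness_cell \<epsilon> n q g i. f x > q i + \<epsilon>) \<and>
      (\<forall>i\<in>{1..n} - J. \<forall>x\<in>witness_cell \<epsilon> n q g i. f x < q i - \<epsilon>)"
    using J assms(1) by (intro bexI[of _ "g J"]) (auto simp: witness_cell_def)
qed (use assms(2,3) in auto)

lemma shattered_set_in_witness_cells:
  assumes "fat_shattered F \<epsilon> A" "card A = n"
  obtains e q g where "bij_betw e {1..n} A" "q \<in> {1..n} \<rightarrow>\<^sub>E \<rat> \<inter> {0..1}"
    "g \<in> Pow {1..n} \<rightarrow>\<^sub>E F" "\<forall>i\<in>{1..n}. e i \<in> witness_cell \<epsilon> n q g i"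
proof -
  obtain h where hQ: "\<forall>a\<in>A. h a \<in> \<rat> \<inter> {0..1}"
    and hs: "\<forall>B\<subseteq>A. \<exists>f\<in>F. (\<forall>a\<in>B. f a > h a + \<epsilon>) \<and> (\<forall>a\<in>A - B. f a < h a - \<epsilon>)"
    using fat_shattered_rational_levels[OF assms(1)] by blast
  obtain fB where fB: "\<And>B. B \<subseteq> A \<Longrightarrow>
      fB B \<in> F \<and> (\<forall>a\<in>B. fB B a > h a + \<epsilon>) \<and> (\<forall>a\<in>A - B. fB B a < h a - \<epsilon>)"
    using hs by metis
  have "finite A" using assms(1) unfolding fat_shattered_def by blast
  then obtain e where e: "bij_betw e {1..n} A"
    using finite_same_card_bij[of "{1..n}" A] assms(2) by auto
  have eA: "e i \<in> A" if "i \<in> {1..n}" for i using e that bij_betwE by blast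
  have eJ: "e ` J \<subseteq> A" if "J \<subseteq> {1..n}" for J using eA that by blast
  define q where "q = restrict (\<lambda>i. h (e i)) {1..n}"
  define g where "g = restrict (\<lambda>J. fB (e ` J)) (Pow {1..n})"
  have q: "q \<in> {1..n} \<rightarrow>\<^sub>E \<rat> \<inter> {0..1}" unfolding q_def using hQ eA by (simp add: restrict_PiE_iff)
  have g: "g \<in> Pow {1..n} \<rightarrow>\<^sub>E F" unfolding g_def using fB eJ by (simp add: restrict_PiE_iff)
  have cells: "e i \<in> witness_cell \<epsilon> n q g i" if i: "i \<in> {1..n}" for i
    unfolding witness_cell_def
  proof (intro CollectI allI impI conjI)
    fix J assume J: "J \<subseteq> {1..n}"
    have qi: "q i = h (e i)" and gJ: "g J = fB (e ` J)" using i J unfolding q_def g_def by auto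
    have "e i \<in> e ` J \<longleftrightarrow> i \<in> J"
      using inj_on_image_mem_iff[OF bij_betw_imp_inj_on[OF e] i J] .
    with eA[OF i] have "i \<in> J \<Longrightarrow> e i \<in> e ` J" "i \<notin> J \<Longrightarrow> e i \<in> A - e ` J" by auto
    then show "i \<in> J \<Longrightarrow> g J (e i) > q i + \<epsilon>" "i \<notin> J \<Longrightarrow> g J (e i) < q i - \<epsilon>"
      using fB[OF eJ[OF J]] unfolding qi gJ by blast+
  qed
  show thesis using that[OF e q g] cells by blast
qed

section \<open>From a bound mod omega_1 to countable exceptional sets\<close>

text \<open>Implication (1) \<Longrightarrow> (2): the union N of all countable witness cells of all
  templates from F' is countable, and no (d+1)-point set outside N is shattered by F'.\<close>
lemma countable_exceptional_set:
  assumes bound: "fat_mod_omega1 F \<epsilon> \<le> enat d" and F': "F' \<subseteq> F" "countable F'"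
  shows "\<exists>N. countable N \<and> fat_restr F' \<epsilon> (UNIV - N) \<le> enat d"
proof -
  define n where "n = Suc d"
  define T where "T = ({1..n} \<rightarrow>\<^sub>E \<rat> \<inter> {0..1::real}) \<times> (Pow {1..n} \<rightarrow>\<^sub>E F')"
  define N where
    "N = (\<Union>(q, g)\<in>T. \<Union>i\<in>{i\<in>{1..n}. countable (witness_cell \<epsilon> n q g i)}. witness_cell \<epsilon> n q g i)"
  have "countable T" unfolding T_def
    using F'(2) countable_rat by (intro countable_SIGMA countable_PiE) auto
  then have "countable N" unfolding N_def by (intro countable_UN) auto
  have countable_cell: "\<exists>i\<in>{1..n}. countable (witness_cell \<epsilon> n q g i)" if "(q, g) \<in> T" for q g
  proof (rule ccontr)
    assume "\<not> ?thesis"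
    with that F'(1) have "fat_shattered_mod_omega1 F \<epsilon> n"
      unfolding T_def by (intro uncountable_cells_imp_mod_shattered) (auto simp: PiE_iff)
    then show False using bound by (auto simp: fat_mod_omega1_le_iff n_def)
  qed
  have "fat_restr F' \<epsilon> (UNIV - N) \<le> enat d"
  proof (rule fat_restr_le_if_no_shattered_card)
    fix A assume A: "A \<subseteq> UNIV - N" "fat_shattered F' \<epsilon> A" "card A = Suc d"
    from A(3) have "card A = n" by (simp add: n_def)
    with A(2) obtain e q g where e: "bij_betw e {1..n} A"
      and q: "q \<in> {1..n} \<rightarrow>\<^sub>E \<rat> \<inter> {0..1}" and g: "g \<in> Pow {1..n} \<rightarrow>\<^sub>E F'"
      and cells: "\<forall>i\<in>{1..n}. e i \<in> witness_cell \<epsilon> n q g i"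
      by (rule shattered_set_in_witness_cells)
    from q g have "(q, g) \<in> T" unfolding T_def by blast
    then obtain i where "i \<in> {1..n}" "countable (witness_cell \<epsilon> n q g i)"
      using countable_cell by blast
    then have "e i \<in> N" using cells \<open>(q, g) \<in> T\<close> unfolding N_def by blast
    moreover have "e i \<in> A" using e \<open>i \<in> {1..n}\<close> bij_betwE by blast
    ultimately show False using A(1) by blast
  qed
  with \<open>countable N\<close> show ?thesis by blast
qed

section \<open>From countable exceptional sets to a bound mod omega_1\<close>

text \<open>The sets shattered mod omega_1 are pairwise disjoint: a point of two of them would be
  pushed above one level and below the other by both singleton witnesses.\<close>
lemma mod_witness_sets_disjoint:
  fixes n :: nat and \<epsilon> :: real
  assumes witness: "\<And>J. J \<subseteq> {1..n} \<Longrightarrow> (\<forall>i\<in>J. \<forall>x\<in>A i. g J x > h i + \<epsilon>) \<and>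
            (\<forall>i\<in>{1..n} - J. \<forall>x\<in>A i. g J x < h i - \<epsilon>)"
    and "\<epsilon> > 0" "i \<in> {1..n}" "j \<in> {1..n}" "i \<noteq> j"
  shows "A i \<inter> A j = {}"
proof (rule ccontr)
  assume "A i \<inter> A j \<noteq> {}"
  then obtain x where x: "x \<in> A i" "x \<in> A j" by blast
  have "g {i} x > h i + \<epsilon>" "g {i} x < h j - \<epsilon>" "g {j} x > h j + \<epsilon>" "g {j} x < h i - \<epsilon>"
    using witness[of "{i}"] witness[of "{j}"] x assms(3-5) by auto
  then show False using \<open>\<epsilon> > 0\<close> by linarith
qed

lemma transversal_fat_shattered:
  fixes n :: nat and \<epsilon> :: real
  assumes witness: "\<And>J. J \<subseteq> {1..n} \<Longrightarrow> (\<forall>i\<in>J. \<forall>x\<in>A i. g J x > h i + \<epsilon>) \<and>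
            (\<forall>i\<in>{1..n} - J. \<forall>x\<in>A i. g J x < h i - \<epsilon>)"
    and h01: "\<forall>i\<in>{1..n}. 0 \<le> h i \<and> h i \<le> 1"
    and a: "\<forall>i\<in>{1..n}. a i \<in> A i" and inj: "inj_on a {1..n}"
  shows "fat_shattered (g ` Pow {1..n}) \<epsilon> (a ` {1..n})"
proof -
  define level where "level = (\<lambda>x. h (inv_into {1..n} a x))"
  have level_a: "level (a i) = h i" if "i \<in> {1..n}" for i
    unfolding level_def using inv_into_f_f[OF inj that] by simp
  have shatters: "\<exists>f\<in>g ` Pow {1..n}. (\<forall>x\<in>B. f x > level x + \<epsilon>) \<and>
      (\<forall>x\<in>a ` {1..n} - B. f x < level x - \<epsilon>)" if B: "B \<subseteq> a ` {1..n}" for B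
  proof -
    define J where "J = {i\<in>{1..n}. a i \<in> B}"
    have J: "J \<subseteq> {1..n}" unfolding J_def by blast
    have "g J (a i) > level (a i) + \<epsilon>" if "i \<in> J" for i
    proof -
      have "i \<in> {1..n}" using that J by blast
      then show ?thesis using witness[OF J] a that by (simp add: level_a)
    qed
    moreover have "g J (a i) < level (a i) - \<epsilon>" if "i \<in> {1..n} - J" for i
    proof -
      have "i \<in> {1..n}" using that by blast
      then show ?thesis using witness[OF J] a that by (simp add: level_a)
    qed
    ultimately have "(\<forall>x\<in>B. g J x > level x + \<epsilon>) \<and> (\<forall>x\<in>a ` {1..n} - B. g J x < level x - \<epsilon>)"
      using B unfolding J_def by blast
    then show ?thesis using J by blast
  qed
  have "\<forall>x\<in>a ` {1..n}. 0 \<le> level x \<and> level x \<le> 1" using h01 level_a by auto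
  then show ?thesis unfolding fat_shattered_def using shatters by blast
qed

text \<open>Implication (2) \<Longrightarrow> (1): choose one point of each A_i outside the countable
  exceptional set of the class of witnesses.\<close>
lemma mod_shattered_le_if_exceptional_sets:
  assumes exc: "\<forall>F'. F' \<subseteq> F \<and> countable F' \<longrightarrow>
       (\<exists>N. countable N \<and> fat_restr F' \<epsilon> (UNIV - N) \<le> enat d)"
    and "\<epsilon> > 0" and "fat_shattered_mod_omega1 F \<epsilon> n"
  shows "n \<le> d"
proof -
  obtain A h where unc: "\<forall>i\<in>{1..n}. uncountable (A i)"
    and h01: "\<forall>i\<in>{1..n}. 0 \<le> h i \<and> h i \<le> 1"
    and sh: "\<forall>J\<subseteq>{1..n}. \<exists>f\<in>F. (\<forall>i\<in>J. \<forall>x\<in>A i. f x > h i + \<epsilon>) \<and>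
            (\<forall>i\<in>{1..n} - J. \<forall>x\<in>A i. f x < h i - \<epsilon>)"
    using assms(3) unfolding fat_shattered_mod_omega1_def by (elim exE conjE) (rule that)
  obtain g where g: "\<And>J. J \<subseteq> {1..n} \<Longrightarrow> g J \<in> F \<and> (\<forall>i\<in>J. \<forall>x\<in>A i. g J x > h i + \<epsilon>) \<and>
            (\<forall>i\<in>{1..n} - J. \<forall>x\<in>A i. g J x < h i - \<epsilon>)"
    using sh by metis
  then have gF: "\<And>J. J \<subseteq> {1..n} \<Longrightarrow> g J \<in> F"
    and witness: "\<And>J. J \<subseteq> {1..n} \<Longrightarrow> (\<forall>i\<in>J. \<forall>x\<in>A i. g J x > h i + \<epsilon>) \<and>
            (\<forall>i\<in>{1..n} - J. \<forall>x\<in>A i. g J x < h i - \<epsilon>)"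
    by blast+
  define F' where "F' = g ` Pow {1..n}"
  have "F' \<subseteq> F" "countable F'" unfolding F'_def using gF by (auto intro: countable_finite)
  then obtain N where N: "countable N" "fat_restr F' \<epsilon> (UNIV - N) \<le> enat d" using exc by blast
  have "A i - N \<noteq> {}" if "i \<in> {1..n}" for i
    using uncountable_minus_countable[of "A i" N] unc that N(1) by force
  then obtain a where a: "\<forall>i\<in>{1..n}. a i \<in> A i - N" by (meson ex_in_conv)
  have inj: "inj_on a {1..n}"
  proof (rule inj_onI, rule ccontr)
    fix i j assume "i \<in> {1..n}" "j \<in> {1..n}" "a i = a j" "i \<noteq> j"
    then have "a i \<in> A i \<inter> A j" using a by (metis Diff_iff IntI)
    then show False
      using mod_witness_sets_disjoint[OF witness \<open>\<epsilon> > 0\<close> \<open>i \<in> {1..n}\<close> \<open>j \<in> {1..n}\<close> \<open>i \<noteq> j\<close>] by blast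
  qed
  have "fat_shattered F' \<epsilon> (a ` {1..n})"
    unfolding F'_def using a inj by (intro transversal_fat_shattered[OF witness h01]) auto
  moreover have "a ` {1..n} \<subseteq> UNIV - N" using a by blast
  ultimately have "enat (card (a ` {1..n})) \<le> fat_restr F' \<epsilon> (UNIV - N)"
    unfolding fat_restr_def by (intro Sup_upper) blast
  also have "\<dots> \<le> enat d" by (rule N(2))
  finally show "n \<le> d" using card_image[OF inj] by simp
qed

theorem mainTheorem18:
  fixes F :: "('a \<Rightarrow> real) set" and \<epsilon> :: real and d :: nat
  assumes "\<forall>f\<in>F. \<forall>x. 0 \<le> f x \<and> f x \<le> 1"
    and "\<epsilon> > 0"
  shows "fat_mod_omega1 F \<epsilon> \<le> enat d \<longleftrightarrow>
    (\<forall>F'. F' \<subseteq> F \<and> countable F' \<longrightarrow>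
       (\<exists>N. countable N \<and> fat_restr F' \<epsilon> (UNIV - N) \<le> enat d))"
proof
  assume "fat_mod_omega1 F \<epsilon> \<le> enat d"
  then show "\<forall>F'. F' \<subseteq> F \<and> countable F' \<longrightarrow>
      (\<exists>N. countable N \<and> fat_restr F' \<epsilon> (UNIV - N) \<le> enat d)"
    using countable_exceptional_set by blast
next
  assume "\<forall>F'. F' \<subseteq> F \<and> countable F' \<longrightarrow>
      (\<exists>N. countable N \<and> fat_restr F' \<epsilon> (UNIV - N) \<le> enat d)"
  then show "fat_mod_omega1 F \<epsilon> \<le> enat d"
    unfolding fat_mod_omega1_le_iff
    using mod_shattered_le_if_exceptional_sets \<open>\<epsilon> > 0\<close> by blast
qed

end
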